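(* Let $n\ge0$ be an integer, let $\tilde\Phi_n(t)=\sum_{k=0}^\infty\alpha_k^{(n)}Q_k(t)$ for $t\in(-1,1)$, and let $L_n$ be the differential operator $$L_n[\varphi](t)=(1-t^2)\varphi''(t)-2t\varphi'(t)+(\chi_n-c^2t^2)\varphi(t).$$ Then for all $t\in(-1,1)$, $$L_n[\tilde\Phi_n](t)=-c^2\Big(\alpha_0^{(n)}t+\frac{\alpha_1^{(n)}}{3}\Big).$$
   Context: For a real number $c>0$, let $\psi_0,\psi_1,\dots$ be the prolate spheroidal wave functions of band limit $c$: the real $L^2[-1,1]$-normalized eigenfunctions of $F_c[\varphi](x)=\int_{-1}^1\varphi(t)e^{icxt}\,dt$ (eigenvalues ordered by decreasing absolute value). $\chi_0<\chi_1<\dots$ are the positive numbers such that $\psi_n$ satisfies $(1-x^2)\psi''(x)-2x\psi'(x)+(\chi_n-c^2x^2)\psi(x)=0$. Let $P_k$ be the Legendre polynomials and $\alpha_k^{(n)}=(k+\tfrac12)\int_{-1}^1\psi_n(x)P_k(x)\,dx$, so $\psi_n=\sum_k\alpha_k^{(n)}P_k$ on $[-1,1]$. The Legendre functions of the second kind are $Q_0(t)=\frac12\log\frac{1+t}{1-t}$, $Q_1(t)=\frac t2\log\frac{1+t}{1-t}-1$, and $(k+1)Q_{k+1}(t)=(2k+1)tQ_k(t)-kQ_{k-1}(t)$ for $k\ge1$. *)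

theory Defs
  imports "HOL-Analysis.Analysis"
begin

fun legP :: "nat \<Rightarrow> real \<Rightarrow> real" where
  "legP 0 t = 1"
| "legP (Suc 0) t = t"
| "legP (Suc (Suc k)) t =
     ((2 * real k + 3) * t * legP (Suc k) t - (real k + 1) * legP k t) / (real k + 2)"

fun legQ :: "nat \<Rightarrow> real \<Rightarrow> real" where
  "legQ 0 t = ln ((1 + t) / (1 - t)) / 2"
| "legQ (Suc 0) t = t / 2 * ln ((1 + t) / (1 - t)) - 1"
| "legQ (Suc (Suc k)) t =
     ((2 * real k + 3) * t * legQ (Suc k) t - (real k + 1) * legQ k t) / (real k + 2)"

text \<open>The system (psi_n, chi_n) of prolate spheroidal wave functions of band limit c:
  real, L2[-1,1]-orthonormal eigenfunctions of F_c with eigenvalues ordered by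
  nonincreasing absolute value, together with the increasing positive numbers chi_n
  such that psi_n solves the prolate ODE on (-1,1).\<close>
definition pswf_system :: "real \<Rightarrow> (nat \<Rightarrow> real \<Rightarrow> real) \<Rightarrow> (nat \<Rightarrow> real) \<Rightarrow> bool" where
  "pswf_system c psi chi \<longleftrightarrow>
     (\<exists>lam :: nat \<Rightarrow> complex.
        (\<forall>n. continuous_on {-1..1} (psi n)) \<and>
        (\<forall>n m. integral {-1..1} (\<lambda>x. psi n x * psi m x) = (if n = m then 1 else 0)) \<and>
        (\<forall>n. \<forall>x\<in>{-1..1}.
            integral {-1..1} (\<lambda>t. complex_of_real (psi n t) * cis (c * x * t))
              = lam n * complex_of_real (psi n x)) \<and>
        (\<forall>n. norm (lam (Suc n)) \<le> norm (lam n)) \<and>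
        (\<forall>n. 0 < chi n \<and> chi n < chi (Suc n)) \<and>
        (\<forall>n. \<exists>d1 d2. \<forall>x\<in>{-1<..<1}.
            (psi n has_real_derivative d1 x) (at x) \<and>
            (d1 has_real_derivative d2 x) (at x) \<and>
            (1 - x\<^sup>2) * d2 x - 2 * x * d1 x + (chi n - c\<^sup>2 * x\<^sup>2) * psi n x = 0))"

definition alpha :: "(nat \<Rightarrow> real \<Rightarrow> real) \<Rightarrow> nat \<Rightarrow> nat \<Rightarrow> real" where
  "alpha psi n k = (real k + 1/2) * integral {-1..1} (\<lambda>x. psi n x * legP k x)"

end

theory Submission
  imports Defs
begin

text \<open>
  Write m_k for the Legendre moments of psi_n, so that alpha_k = (k + 1/2) m_k. Integrating the
  prolate equation against P_k and moving the Legendre operator onto P_k (the boundary terms vanish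
  because psi_n is bounded and (1 - x^2) psi_n' has bounded derivative) gives the recurrence
  (chi_n - k(k+1)) m_k = c^2 (moments of x^2 psi_n)_k, and multiplication by x acts on moments through
  x P_k = ((k+1) P_{k+1} + k P_{k-1})/(2k+1). This recurrence forces m_k to decay faster than
  28^(-k), which beats the growth 7^k of Q_k, Q_k', Q_k'' on compact subsets of (-1,1), so the
  series may be differentiated termwise. As Q_k solves the Legendre equation, L_n applied termwise
  gives the sum of alpha_k (chi_n - k(k+1) - c^2 t^2) Q_k. Substituting the recurrence and summing by
  parts twice against Bonnet's recurrence turns the x^2 acting on the coefficients into t^2 acting on
  the Q_k, and everything cancels except the defect coming from Q_1 = t Q_0 - 1, which is
  -c^2 (alpha_0 t + alpha_1 / 3).
\<close>

section \<open>Bonnet's recurrence\<close>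

lemma bonnet_step_bound:
  fixes K X Y Z M :: real
  assumes "0 \<le> K" and "(K + 2) * X = (2 * K + 3) * Y - (K + 1) * Z"
    and "\<bar>Y\<bar> \<le> 21 * M" and "\<bar>Z\<bar> \<le> M"
  shows "\<bar>X\<bar> \<le> 49 * M"
proof -
  have M: "0 \<le> M" using assms(4) by linarith
  have "(K + 2) * \<bar>X\<bar> = \<bar>(2 * K + 3) * Y - (K + 1) * Z\<bar>"
    using assms(1,2) by (simp flip: assms(2) add: abs_mult)
  also have "\<dots> \<le> (2 * K + 3) * \<bar>Y\<bar> + (K + 1) * \<bar>Z\<bar>"
    using assms(1) by (simp add: abs_mult order_trans[OF abs_triangle_ineq4])
  also have "\<dots> \<le> (2 * K + 3) * (21 * M) + (K + 1) * M"
    using assms by (intro add_mono mult_left_mono) auto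
  also have "\<dots> \<le> (K + 2) * (49 * M)"
    using mult_right_mono[OF _ M, of "43 * K + 64" "49 * K + 98"] assms(1) by (simp add: algebra_simps)
  finally show ?thesis using assms(1) by simp
qed

text \<open>d and e satisfy the recurrences obtained by differentiating Bonnet's recurrence for f once and
  twice with respect to t, as the derivatives of a family of solutions would.\<close>
locale bonnet_family =
  fixes t :: real and f d e :: "nat \<Rightarrow> real"
  assumes rec_f: "(real k + 2) * f (Suc (Suc k)) = (2 * real k + 3) * t * f (Suc k) - (real k + 1) * f k"
    and rec_d: "(real k + 2) * d (Suc (Suc k)) =
                  (2 * real k + 3) * (f (Suc k) + t * d (Suc k)) - (real k + 1) * d k"
    and rec_e: "(real k + 2) * e (Suc (Suc k)) =
                  (2 * real k + 3) * (2 * d (Suc k) + t * e (Suc k)) - (real k + 1) * e k"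
begin

lemma derivative_identity:
  assumes "(1 - t^2) * d 0 = t * f 0 - f 1" and "(1 - t^2) * d 1 = 2 * (t * f 1 - f 2)"
  shows "(1 - t^2) * d k = (real k + 1) * (t * f k - f (Suc k))"
proof (induction k rule: induct_nat_012)
  case (ge2 k)
  have "(real k + 3) * f (Suc (Suc (Suc k))) = (2 * real k + 5) * t * f (Suc (Suc k)) - (real k + 2) * f (Suc k)"
    using rec_f[of "Suc k"] by (simp add: algebra_simps)
  then have "(real k + 2) * ((1 - t^2) * d (Suc (Suc k))) =
        (real k + 2) * ((real k + 3) * (t * f (Suc (Suc k)) - f (Suc (Suc (Suc k)))))"
    using rec_f[of k] rec_d[of k] ge2 by (simp add: algebra_simps) algebra
  then show ?case by (simp only: mult_cancel_left) (auto simp: algebra_simps)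
qed (use assms in \<open>simp_all add: numeral_2_eq_2\<close>)

lemma legendre_equation:
  assumes "(1 - t^2) * d 0 = t * f 0 - f 1" and "(1 - t^2) * d 1 = 2 * (t * f 1 - f 2)"
    and "(1 - t^2) * e 0 - 2 * t * d 0 = 0" and "(1 - t^2) * e 1 - 2 * t * d 1 + 2 * f 1 = 0"
  shows "(1 - t^2) * e k - 2 * t * d k + real k * (real k + 1) * f k = 0"
proof (induction k rule: induct_nat_012)
  case (ge2 k)
  have "(real k + 2) * ((1 - t^2) * e (Suc (Suc k)) - 2 * t * d (Suc (Suc k))
          + (real k + 2) * (real k + 3) * f (Suc (Suc k))) = 0"
    using rec_f[of k] rec_d[of k] rec_e[of k] derivative_identity[OF assms(1,2), of "Suc k"] ge2
    by (simp add: algebra_simps) algebra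
  then show ?case by (simp only: mult_eq_0_iff) (auto simp: algebra_simps)
qed (use assms in simp_all)

lemma exponential_bound:
  assumes "\<bar>t\<bar> \<le> 1" and "\<And>i. i \<le> 1 \<Longrightarrow> \<bar>f i\<bar> \<le> D \<and> \<bar>d i\<bar> \<le> D \<and> \<bar>e i\<bar> \<le> D"
  shows "\<bar>f k\<bar> \<le> D * 7^k \<and> \<bar>d k\<bar> \<le> D * 7^k \<and> \<bar>e k\<bar> \<le> D * 7^k"
proof (induction k rule: induct_nat_012)
  case 0
  then show ?case using assms(2)[of 0] by simp
next
  case 1
  have "0 \<le> D" using assms(2)[of 0] by auto
  then show ?case using assms(2)[of 1] by auto
next
  case (ge2 k)
  define M where "M = D * 7^k"
  have t: "\<bar>t * x\<bar> \<le> \<bar>x\<bar>" for x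
    using assms(1) by (simp add: abs_mult mult_left_le_one_le)
  have IH: "\<bar>f k\<bar> \<le> M" "\<bar>d k\<bar> \<le> M" "\<bar>e k\<bar> \<le> M"
    "\<bar>f (Suc k)\<bar> \<le> 7 * M" "\<bar>d (Suc k)\<bar> \<le> 7 * M" "\<bar>e (Suc k)\<bar> \<le> 7 * M"
    using ge2 by (simp_all add: M_def)
  have "\<bar>t * f (Suc k)\<bar> \<le> 21 * M"
    using t[of "f (Suc k)"] IH(1,4) by linarith
  moreover have "\<bar>f (Suc k) + t * d (Suc k)\<bar> \<le> 21 * M"
    using abs_triangle_ineq[of "f (Suc k)" "t * d (Suc k)"] t[of "d (Suc k)"] IH(1,4,5) by linarith
  moreover have "\<bar>2 * d (Suc k) + t * e (Suc k)\<bar> \<le> 21 * M"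
    using abs_triangle_ineq[of "2 * d (Suc k)" "t * e (Suc k)"] t[of "e (Suc k)"] IH(1,5,6) by linarith
  ultimately have "\<bar>f (Suc (Suc k))\<bar> \<le> 49 * M" "\<bar>d (Suc (Suc k))\<bar> \<le> 49 * M"
    "\<bar>e (Suc (Suc k))\<bar> \<le> 49 * M"
    using IH(1-3) rec_f[of k] rec_d[of k] rec_e[of k]
    by (simp_all add: mult.assoc bonnet_step_bound[of "real k"])
  then show ?case by (simp add: M_def)
qed

end

section \<open>Legendre functions and their derivatives\<close>

fun dlegP :: "nat \<Rightarrow> real \<Rightarrow> real" where
  "dlegP 0 t = 0"
| "dlegP (Suc 0) t = 1"
| "dlegP (Suc (Suc k)) t =
     ((2 * real k + 3) * (legP (Suc k) t + t * dlegP (Suc k) t) - (real k + 1) * dlegP k t) / (real k + 2)"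

fun d2legP :: "nat \<Rightarrow> real \<Rightarrow> real" where
  "d2legP 0 t = 0"
| "d2legP (Suc 0) t = 0"
| "d2legP (Suc (Suc k)) t =
     ((2 * real k + 3) * (2 * dlegP (Suc k) t + t * d2legP (Suc k) t) - (real k + 1) * d2legP k t) / (real k + 2)"

fun dlegQ :: "nat \<Rightarrow> real \<Rightarrow> real" where
  "dlegQ 0 t = 1 / (1 - t^2)"
| "dlegQ (Suc 0) t = legQ 0 t + t / (1 - t^2)"
| "dlegQ (Suc (Suc k)) t =
     ((2 * real k + 3) * (legQ (Suc k) t + t * dlegQ (Suc k) t) - (real k + 1) * dlegQ k t) / (real k + 2)"

fun d2legQ :: "nat \<Rightarrow> real \<Rightarrow> real" where
  "d2legQ 0 t = 2 * t / (1 - t^2)^2"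
| "d2legQ (Suc 0) t = 1 / (1 - t^2) + (1 + t^2) / (1 - t^2)^2"
| "d2legQ (Suc (Suc k)) t =
     ((2 * real k + 3) * (2 * dlegQ (Suc k) t + t * d2legQ (Suc k) t) - (real k + 1) * d2legQ k t) / (real k + 2)"

lemma bonnet_family_legP: "bonnet_family t (\<lambda>k. legP k t) (\<lambda>k. dlegP k t) (\<lambda>k. d2legP k t)"
  by unfold_locales (simp_all add: field_simps)

lemma bonnet_family_legQ: "bonnet_family t (\<lambda>k. legQ k t) (\<lambda>k. dlegQ k t) (\<lambda>k. d2legQ k t)"
  by unfold_locales (simp_all add: field_simps)

lemma has_real_derivative_legP: "(legP k has_real_derivative dlegP k t) (at t)"
proof (induction k arbitrary: t rule: induct_nat_012)
  case (ge2 k)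
  have "((\<lambda>t. (2 * real k + 3) * t * legP (Suc k) t - (real k + 1) * legP k t) has_real_derivative
         (2 * real k + 3) * (legP (Suc k) t + t * dlegP (Suc k) t) - (real k + 1) * dlegP k t) (at t)"
    by (auto intro!: derivative_eq_intros ge2 simp: algebra_simps)
  from DERIV_cdivide[OF this, of "real k + 2"] show ?case
    by (simp add: legP.simps(3)[abs_def])
qed (simp_all add: legP.simps(1,2)[abs_def])

lemma has_real_derivative_dlegP: "(dlegP k has_real_derivative d2legP k t) (at t)"
proof (induction k arbitrary: t rule: induct_nat_012)
  case (ge2 k)
  have "((\<lambda>t. (2 * real k + 3) * (legP (Suc k) t + t * dlegP (Suc k) t) - (real k + 1) * dlegP k t)
         has_real_derivative
         (2 * real k + 3) * (2 * dlegP (Suc k) t + t * d2legP (Suc k) t) - (real k + 1) * d2legP k t) (at t)"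
    by (auto intro!: derivative_eq_intros ge2 has_real_derivative_legP simp: algebra_simps)
  from DERIV_cdivide[OF this, of "real k + 2"] show ?case
    by (simp add: dlegP.simps(3)[abs_def])
qed (simp_all add: dlegP.simps(1,2)[abs_def])

lemma legendre_equation_legP:
  "(1 - t^2) * d2legP k t - 2 * t * dlegP k t + real k * (real k + 1) * legP k t = 0"
  by (rule bonnet_family.legendre_equation[OF bonnet_family_legP])
    (simp_all add: numeral_2_eq_2 power2_eq_square field_simps)

lemma one_minus_square_pos:
  fixes t :: real
  assumes "t \<in> {-1<..<1}" shows "0 < 1 - t^2"
proof -
  have "t^2 < 1" using assms by (simp add: abs_square_less_1 abs_less_iff)
  then show ?thesis by simp
qed

lemma has_real_derivative_legQ:
  assumes "t \<in> {-1<..<1}"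
  shows "(legQ k has_real_derivative dlegQ k t) (at t)"
  using assms
proof (induction k arbitrary: t rule: induct_nat_012)
  case 0
  then have "0 < 1 - t" "0 < 1 + t" "1 - t * t \<noteq> 0"
    using one_minus_square_pos[of t] by (auto simp: power2_eq_square)
  moreover have "legQ 0 = (\<lambda>t. ln ((1 + t) / (1 - t)) / 2)" by (simp add: fun_eq_iff)
  ultimately show ?case
    by (auto intro!: derivative_eq_intros simp: power2_eq_square divide_simps) (simp add: algebra_simps)
next
  case 1
  then have "0 < 1 - t" "0 < 1 + t" "1 - t * t \<noteq> 0"
    using one_minus_square_pos[of t] by (auto simp: power2_eq_square)
  moreover have "legQ (Suc 0) = (\<lambda>t. t / 2 * ln ((1 + t) / (1 - t)) - 1)" by (simp add: fun_eq_iff)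
  ultimately show ?case
    by (auto intro!: derivative_eq_intros simp: power2_eq_square divide_simps) (simp add: algebra_simps)
next
  case (ge2 k)
  have "((\<lambda>t. (2 * real k + 3) * t * legQ (Suc k) t - (real k + 1) * legQ k t) has_real_derivative
         (2 * real k + 3) * (legQ (Suc k) t + t * dlegQ (Suc k) t) - (real k + 1) * dlegQ k t) (at t)"
    using ge2 by (auto intro!: derivative_eq_intros simp: algebra_simps)
  from DERIV_cdivide[OF this, of "real k + 2"] show ?case
    by (simp add: legQ.simps(3)[abs_def])
qed

lemma has_real_derivative_dlegQ:
  assumes "t \<in> {-1<..<1}"
  shows "(dlegQ k has_real_derivative d2legQ k t) (at t)"
  using assms
proof (induction k arbitrary: t rule: induct_nat_012)
  case 0
  then have "1 - t * t \<noteq> 0" using one_minus_square_pos[of t] by (simp add: power2_eq_square)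
  moreover have "dlegQ 0 = (\<lambda>t. 1 / (1 - t^2))" by (simp add: fun_eq_iff)
  ultimately show ?case by (auto intro!: derivative_eq_intros simp: power2_eq_square)
next
  case 1
  then have "1 - t * t \<noteq> 0" using one_minus_square_pos[of t] by (simp add: power2_eq_square)
  then have "((\<lambda>t. t / (1 - t^2)) has_real_derivative (1 + t^2) / (1 - t^2)^2) (at t)"
    by (auto intro!: derivative_eq_intros simp: power2_eq_square)
  from DERIV_add[OF has_real_derivative_legQ[OF 1, of 0] this] show ?case
    by (simp add: dlegQ.simps(2)[abs_def])
next
  case (ge2 k)
  have "((\<lambda>t. (2 * real k + 3) * (legQ (Suc k) t + t * dlegQ (Suc k) t) - (real k + 1) * dlegQ k t)
         has_real_derivative
         (2 * real k + 3) * (2 * dlegQ (Suc k) t + t * d2legQ (Suc k) t) - (real k + 1) * d2legQ k t) (at t)"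
    using ge2 by (auto intro!: derivative_eq_intros has_real_derivative_legQ simp: algebra_simps)
  from DERIV_cdivide[OF this, of "real k + 2"] show ?case
    by (simp add: dlegQ.simps(3)[abs_def])
qed

lemma legendre_equation_legQ:
  assumes "t \<in> {-1<..<1}"
  shows "(1 - t^2) * d2legQ k t - 2 * t * dlegQ k t + real k * (real k + 1) * legQ k t = 0"
proof (rule bonnet_family.legendre_equation[OF bonnet_family_legQ])
  define u where "u = 1 - t^2"
  have u: "u \<noteq> 0" using one_minus_square_pos[OF assms] by (simp add: u_def)
  show "u * dlegQ 0 t = t * legQ 0 t - legQ 1 t"
    and "u * dlegQ 1 t = 2 * (t * legQ 1 t - legQ 2 t)"
    using u by (simp_all add: u_def numeral_2_eq_2 field_simps)
  have t2: "t^2 = 1 - u" by (simp add: u_def)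
  have q: "d2legQ 0 t = 2 * t / u^2" "d2legQ 1 t = 1 / u + (2 - u) / u^2"
    "dlegQ 0 t = 1 / u" "dlegQ 1 t = legQ 0 t + t / u" "legQ 1 t = t * legQ 0 t - 1"
    by (simp_all add: u_def[symmetric] t2)
  show "u * d2legQ 0 t - 2 * t * dlegQ 0 t = 0"
    unfolding q using u by (simp add: field_simps power2_eq_square)
  have "u * d2legQ 1 t - 2 * t * dlegQ 1 t + 2 * legQ 1 t = (2 - u - 2 * t^2 - u) / u"
    unfolding q using u by (simp add: field_simps power2_eq_square)
  then show "u * d2legQ 1 t - 2 * t * dlegQ 1 t + 2 * legQ 1 t = 0"
    by (simp add: t2)
qed

lemma abs_legP_le:
  assumes "\<bar>x\<bar> \<le> 1" shows "\<bar>legP k x\<bar> \<le> 7^k"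
  using bonnet_family.exponential_bound[OF bonnet_family_legP assms, of 1] assms
  by (force simp: le_Suc_eq)

lemma continuous_on_compact_abs_bound:
  fixes g :: "real \<Rightarrow> real"
  assumes "compact S" and "continuous_on S g"
  obtains B where "\<And>x. x \<in> S \<Longrightarrow> \<bar>g x\<bar> \<le> B"
  using compact_imp_bounded[OF compact_continuous_image[OF assms(2,1)]]
  by (auto simp: bounded_iff)

lemma legQ_exponential_bound:
  assumes "0 \<le> r" and "r < 1"
  obtains D where "\<And>k t. t \<in> {-r..r} \<Longrightarrow>
    \<bar>legQ k t\<bar> \<le> D * 7^k \<and> \<bar>dlegQ k t\<bar> \<le> D * 7^k \<and> \<bar>d2legQ k t\<bar> \<le> D * 7^k"
proof -
  have "{-r..r} \<subseteq> {-1<..<1}" using assms by auto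
  then have "1 - t^2 \<noteq> 0" "0 < 1 - t" "0 < 1 + t" if "t \<in> {-r..r}" for t
    using one_minus_square_pos[of t] that by auto
  then have "continuous_on {-r..r} (\<lambda>t. \<bar>legQ 0 t\<bar> + \<bar>legQ 1 t\<bar> + \<bar>dlegQ 0 t\<bar> + \<bar>dlegQ 1 t\<bar>
                                       + \<bar>d2legQ 0 t\<bar> + \<bar>d2legQ 1 t\<bar>)"
    using assms by (auto intro!: continuous_intros)
  then obtain D where D: "\<And>t. t \<in> {-r..r} \<Longrightarrow> \<bar>\<bar>legQ 0 t\<bar> + \<bar>legQ 1 t\<bar> + \<bar>dlegQ 0 t\<bar> + \<bar>dlegQ 1 t\<bar>
                                       + \<bar>d2legQ 0 t\<bar> + \<bar>d2legQ 1 t\<bar>\<bar> \<le> D"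
    using continuous_on_compact_abs_bound[OF compact_Icc] by blast
  show thesis
  proof (rule that, rule bonnet_family.exponential_bound[OF bonnet_family_legQ])
    fix t assume t: "t \<in> {-r..r}"
    then show "\<bar>t\<bar> \<le> 1" using assms by auto
    fix i :: nat assume "i \<le> 1"
    then have "i = 0 \<or> i = 1" by auto
    then show "\<bar>legQ i t\<bar> \<le> D \<and> \<bar>dlegQ i t\<bar> \<le> D \<and> \<bar>d2legQ i t\<bar> \<le> D"
      using D[OF t] by (smt (verit))
  qed
qed

section \<open>Vanishing of the flux at the endpoints\<close>

lemma exceeds_if_derivative_ge_inverse_distance:
  fixes g g' :: "real \<Rightarrow> real" and x K B :: real
  assumes "x < 1" and K: "0 < K"
    and deriv: "\<And>z. x \<le> z \<Longrightarrow> z < 1 \<Longrightarrow> (g has_real_derivative g' z) (at z)"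
    and lower: "\<And>z. x \<le> z \<Longrightarrow> z < 1 \<Longrightarrow> K / (1 - z) \<le> g' z"
  obtains y where "x < y" "y < 1" "B < g y"
proof -
  define L where "L = \<bar>B - g x\<bar> + 1"
  define y where "y = 1 - (1 - x) * exp (- L / K)"
  have "- L / K < 0" using K by (intro divide_neg_pos) (simp_all add: L_def)
  then have "exp (- L / K) < 1" by simp
  then have "(1 - x) * exp (- L / K) < (1 - x) * 1"
    using \<open>x < 1\<close> by (intro mult_strict_left_mono) auto
  moreover have "0 < (1 - x) * exp (- L / K)" using \<open>x < 1\<close> by simp
  ultimately have y: "x < y" "y < 1" by (auto simp: y_def)
  have "g x + K * ln (1 - x) \<le> g y + K * ln (1 - y)"
  proof (rule DERIV_nonneg_imp_nondecreasing[of x y "\<lambda>z. g z + K * ln (1 - z)"])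
    fix z assume z: "x \<le> z" "z \<le> y"
    then have "((\<lambda>z. g z + K * ln (1 - z)) has_real_derivative g' z - K / (1 - z)) (at z)"
      using y by (auto intro!: derivative_eq_intros deriv simp: field_simps)
    moreover have "0 \<le> g' z - K / (1 - z)" using lower[of z] z y by simp
    ultimately show "\<exists>d. ((\<lambda>z. g z + K * ln (1 - z)) has_real_derivative d) (at z) \<and> 0 \<le> d"
      by blast
  qed (use y in simp)
  moreover have "ln (1 - y) = ln (1 - x) - L / K"
    using \<open>x < 1\<close> by (simp add: y_def ln_mult)
  ultimately have "g x + K * ln (1 - x) \<le> g y + K * ln (1 - x) - K * (L / K)"
    by (simp add: right_diff_distrib)
  then have "g x + L \<le> g y" using K by simp
  then show thesis using that y by (simp add: L_def)
qed

lemma inverse_distance_le_of_weighted_ge: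
  fixes z e w :: real
  assumes "0 \<le> z" "z < 1" "0 < e" "e / 2 \<le> (1 - z^2) * w"
  shows "e / 4 / (1 - z) \<le> w"
proof -
  have pos: "0 < (1 - z) * (1 + z)" using assms by simp
  moreover have "e / 2 \<le> (1 - z) * (1 + z) * w" using assms(4) by (simp add: power2_eq_square algebra_simps)
  ultimately have "0 \<le> w" using assms(3) mult_pos_neg[of "(1 - z) * (1 + z)" w] by linarith
  then have "(1 - z) * (1 + z) * w \<le> (1 - z) * 2 * w"
    using assms by (intro mult_right_mono mult_left_mono) auto
  with \<open>e / 2 \<le> (1 - z) * (1 + z) * w\<close> show ?thesis using assms by (simp add: field_simps)
qed

text \<open>h = (1 - y^2) f' is Lipschitz. If |h| stayed above e somewhere near 1, it would keep one sign
  and stay above e/2 up to 1, so f' would be at least e/(4(1 - y)) in absolute value and f unbounded.\<close>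
lemma weighted_derivative_tendsto_0_at_left_1:
  fixes f f' h' :: "real \<Rightarrow> real"
  assumes bnd: "\<And>x. x \<in> {-1<..<1} \<Longrightarrow> \<bar>f x\<bar> \<le> B"
    and df: "\<And>x. x \<in> {-1<..<1} \<Longrightarrow> (f has_real_derivative f' x) (at x)"
    and dh: "\<And>x. x \<in> {-1<..<1} \<Longrightarrow> ((\<lambda>y. (1 - y^2) * f' y) has_real_derivative h' x) (at x)"
    and h'_bnd: "\<And>x. x \<in> {-1<..<1} \<Longrightarrow> \<bar>h' x\<bar> \<le> M"
  shows "((\<lambda>y. (1 - y^2) * f' y) \<longlongrightarrow> 0) (at_left 1)"
proof -
  define h where "h = (\<lambda>y. (1 - y^2) * f' y)"
  have M: "0 \<le> M" using h'_bnd[of 0] by auto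
  have lip: "\<bar>h y - h x\<bar> \<le> M * (y - x)" if "x \<in> {-1<..<1}" "y \<in> {-1<..<1}" "x \<le> y" for x y
    using field_differentiable_bound[of "{-1<..<1}" h h' M y x] that dh h'_bnd
    by (auto simp: h_def has_field_derivative_at_within)
  show ?thesis
  proof (rule tendstoI)
    fix e :: real assume e: "0 < e"
    define a where "a = max 0 (1 - e / (2 * (M + 1)))"
    have a: "0 \<le> a" "a < 1" using e M by (auto simp: a_def)
    have "M * (1 - a) \<le> M * (e / (2 * (M + 1)))"
      using M by (intro mult_left_mono) (auto simp: a_def)
    also have "\<dots> \<le> e / 2" using M e by (simp add: field_simps)
    finally have a_close: "M * (1 - a) \<le> e / 2" .
    have small: "\<bar>h y\<bar> < e" if "a < y" "y < 1" for y
    proof (rule ccontr)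
      assume "\<not> \<bar>h y\<bar> < e"
      define s where "s = sgn (h y)"
      have s: "\<bar>s\<bar> = 1" "s * h y = \<bar>h y\<bar>" using \<open>\<not> \<bar>h y\<bar> < e\<close> e
        by (auto simp: s_def sgn_if)
      have "e / 4 / (1 - z) \<le> s * f' z" if z: "y \<le> z" "z < 1" for z
      proof -
        have "\<bar>h z - h y\<bar> \<le> M * (1 - a)"
          using lip[of y z] mult_left_mono[of "z - y" "1 - a" M] M z \<open>a < y\<close> a a_close by auto
        then have "e / 2 \<le> s * h z"
          using s \<open>\<not> \<bar>h y\<bar> < e\<close> a_close abs_mult[of s "h z - h y"] by (auto simp: algebra_simps)
        also have "s * h z = (1 - z^2) * (s * f' z)" by (simp add: h_def)
        finally show ?thesis using z \<open>a < y\<close> a e by (intro inverse_distance_le_of_weighted_ge) auto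
      qed
      then obtain w where "y < w" "w < 1" "B < s * f w"
        using exceeds_if_derivative_ge_inverse_distance[of y "e / 4" "\<lambda>z. s * f z" "\<lambda>z. s * f' z" B]
          \<open>y < 1\<close> e \<open>a < y\<close> a by (force intro: DERIV_cmult df)
      moreover have "\<bar>s * f w\<bar> \<le> B" using bnd[of w] s \<open>y < w\<close> \<open>w < 1\<close> \<open>a < y\<close> a
        by (simp add: abs_mult)
      ultimately show False by linarith
    qed
    show "\<forall>\<^sub>F y in at_left 1. dist ((1 - y^2) * f' y) 0 < e"
      using eventually_at_left_real[OF a(2)] by eventually_elim (use small in \<open>auto simp: h_def\<close>)
  qed
qed

lemma weighted_derivative_tendsto_0_at_right_minus_1:
  fixes f f' h' :: "real \<Rightarrow> real"
  assumes bnd: "\<And>x. x \<in> {-1<..<1} \<Longrightarrow> \<bar>f x\<bar> \<le> B"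
    and df: "\<And>x. x \<in> {-1<..<1} \<Longrightarrow> (f has_real_derivative f' x) (at x)"
    and dh: "\<And>x. x \<in> {-1<..<1} \<Longrightarrow> ((\<lambda>y. (1 - y^2) * f' y) has_real_derivative h' x) (at x)"
    and h'_bnd: "\<And>x. x \<in> {-1<..<1} \<Longrightarrow> \<bar>h' x\<bar> \<le> M"
  shows "((\<lambda>y. (1 - y^2) * f' y) \<longlongrightarrow> 0) (at_right (-1))"
proof -
  have mirror: "- x \<in> {-1<..<1}" if "x \<in> {-1<..<1}" for x :: real using that by auto
  have "((\<lambda>y. (1 - y^2) * - f' (- y)) \<longlongrightarrow> 0) (at_left 1)"
  proof (rule weighted_derivative_tendsto_0_at_left_1[where f="\<lambda>x. f (- x)" and h'="\<lambda>x. h' (- x)"])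
    fix x :: real assume x: "x \<in> {-1<..<1}"
    show "\<bar>f (- x)\<bar> \<le> B" and "\<bar>h' (- x)\<bar> \<le> M" using bnd h'_bnd mirror[OF x] by auto
    show "((\<lambda>x. f (- x)) has_real_derivative - f' (- x)) (at x)"
      using df[OF mirror[OF x]] DERIV_mirror by blast
    have "((\<lambda>y. (1 - (- y)^2) * f' (- y)) has_real_derivative - h' (- x)) (at x)"
      using dh[OF mirror[OF x]] DERIV_mirror[of "\<lambda>y. (1 - y^2) * f' y"] by simp
    from DERIV_minus[OF this]
    show "((\<lambda>y. (1 - y^2) * - f' (- y)) has_real_derivative h' (- x)) (at x)" by simp
  qed
  then have "((\<lambda>y. (1 - (- y)^2) * f' (- y)) \<longlongrightarrow> 0) (at_left (- (- 1)))"
    using tendsto_minus[of _ 0] by fastforce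
  then show ?thesis unfolding at_right_minus[of "-1"] filterlim_filtermap .
qed

lemma has_integral_from_one_sided_limits:
  fixes F g :: "real \<Rightarrow> real"
  assumes "a < b"
    and deriv: "\<And>x. x \<in> {a<..<b} \<Longrightarrow> (F has_real_derivative g x) (at x)"
    and lim_a: "(F \<longlongrightarrow> A) (at_right a)" and lim_b: "(F \<longlongrightarrow> B) (at_left b)"
  shows "(g has_integral B - A) {a..b}"
proof -
  define G where "G = (\<lambda>x. if x = a then A else if x = b then B else F x)"
  have eq: "G x = F x" if "x \<in> {a<..<b}" for x using that by (auto simp: G_def)
  have dG: "(G has_real_derivative g x) (at x)" if "x \<in> {a<..<b}" for x
    by (rule has_field_derivative_transform_within_open[OF deriv[OF that] _ that eq[symmetric]]) simp
  have "continuous_on {a..b} G"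
  proof (rule continuous_on_IccI)
    have "\<forall>\<^sub>F x in at_right a. F x = G x"
      using eventually_at_right_real[OF \<open>a < b\<close>] by eventually_elim (simp add: eq)
    with lim_a show "(G \<longlongrightarrow> G a) (at_right a)" by (simp add: G_def tendsto_cong)
    have "\<forall>\<^sub>F x in at_left b. F x = G x"
      using eventually_at_left_real[OF \<open>a < b\<close>] by eventually_elim (simp add: eq)
    with lim_b show "(G \<longlongrightarrow> G b) (at_left b)" using \<open>a < b\<close> by (simp add: G_def tendsto_cong)
  qed (use \<open>a < b\<close> dG DERIV_isCont in \<open>auto simp: isCont_def\<close>)
  then have "(g has_integral G b - G a) {a..b}"
    using \<open>a < b\<close> dG
    by (intro fundamental_theorem_of_calculus_interior) (auto simp: has_real_derivative_iff_has_vector_derivative[symmetric])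
  then show ?thesis using \<open>a < b\<close> by (simp add: G_def)
qed

section \<open>Legendre moments of solutions of the prolate equation\<close>

definition leg_moment :: "(real \<Rightarrow> real) \<Rightarrow> nat \<Rightarrow> real" where
  "leg_moment f k = integral {-1..1} (\<lambda>x. f x * legP k x)"

text \<open>If m is the sequence of Legendre moments of f, then xmul m is that of x f, because
  x P_k = ((k+1) P_{k+1} + k P_{k-1})/(2k+1); at k = 0 the junk value m (0 - 1) carries the factor 0.\<close>
definition xmul :: "(nat \<Rightarrow> real) \<Rightarrow> nat \<Rightarrow> real" where
  "xmul m k = ((real k + 1) * m (Suc k) + real k * m (k - 1)) / (2 * real k + 1)"

lemma x_times_legP:
  "x * legP k x = ((real k + 1) * legP (Suc k) x + real k * legP (k - 1) x) / (2 * real k + 1)"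
proof (cases k)
  case (Suc j)
  have "(real j + 2) * legP (Suc (Suc j)) x = (2 * real j + 3) * x * legP (Suc j) x - (real j + 1) * legP j x"
    by (rule bonnet_family.rec_f[OF bonnet_family_legP])
  then show ?thesis using Suc by (simp add: field_simps del: legP.simps)
qed simp

lemma continuous_on_legP: "continuous_on S (legP k)" "continuous_on S (dlegP k)"
  using has_real_derivative_legP has_real_derivative_dlegP
  by (blast intro: continuous_at_imp_continuous_on DERIV_isCont)+

lemma has_integral_leg_moment:
  "continuous_on {-1..1} f \<Longrightarrow> ((\<lambda>x. f x * legP k x) has_integral leg_moment f k) {-1..1}"
  unfolding leg_moment_def
  by (intro integrable_integral integrable_continuous_interval continuous_intros continuous_on_legP)

lemma abs_leg_moment_le:
  assumes cont: "continuous_on {-1..1} f" and bnd: "\<And>x. x \<in> {-1..1} \<Longrightarrow> \<bar>f x\<bar> \<le> B"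
  shows "\<bar>leg_moment f k\<bar> \<le> 2 * B * 7^k"
proof -
  have "norm (integral {-1..1} (\<lambda>x. f x * legP k x)) \<le> B * 7^k * (1 - (-1))"
  proof (rule integral_bound)
    show "continuous_on {-1..1} (\<lambda>x. f x * legP k x)"
      by (intro continuous_intros cont continuous_on_legP)
    fix x :: real assume x: "x \<in> {-1..1}"
    then have "\<bar>legP k x\<bar> \<le> 7^k" by (intro abs_legP_le) auto
    moreover have "0 \<le> B" using bnd[OF x] by linarith
    ultimately show "norm (f x * legP k x) \<le> B * 7^k"
      using bnd[OF x] by (simp add: abs_mult mult_mono')
  qed simp
  then show ?thesis by (simp add: leg_moment_def)
qed

lemma leg_moment_times_x:
  assumes "continuous_on {-1..1} f"
  shows "leg_moment (\<lambda>x. x * f x) = xmul (leg_moment f)"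
proof
  fix k
  have "((\<lambda>x. ((real k + 1) * (f x * legP (Suc k) x) + real k * (f x * legP (k - 1) x)) / (2 * real k + 1))
          has_integral xmul (leg_moment f) k) {-1..1}"
    unfolding xmul_def
    by (intro has_integral_divide has_integral_add has_integral_mult_right has_integral_leg_moment assms)
  moreover have "x * f x * legP k x
                 = ((real k + 1) * (f x * legP (Suc k) x) + real k * (f x * legP (k - 1) x)) / (2 * real k + 1)"
    for x
  proof -
    have "x * f x * legP k x = f x * (x * legP k x)" by simp
    also have "\<dots> = ((real k + 1) * (f x * legP (Suc k) x) + real k * (f x * legP (k - 1) x)) / (2 * real k + 1)"
      unfolding x_times_legP by (simp add: field_simps)
    finally show ?thesis .
  qed
  ultimately have "((\<lambda>x. x * f x * legP k x) has_integral xmul (leg_moment f) k) {-1..1}"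
    by simp
  then show "leg_moment (\<lambda>x. x * f x) k = xmul (leg_moment f) k"
    unfolding leg_moment_def by (rule integral_unique)
qed

lemma prolate_flux_tendsto_0:
  fixes p p' p'' :: "real \<Rightarrow> real" and ch c :: real
  assumes cont: "continuous_on {-1..1} p"
    and ode: "\<And>x. x \<in> {-1<..<1} \<Longrightarrow> (p has_real_derivative p' x) (at x) \<and> (p' has_real_derivative p'' x) (at x)
               \<and> (1 - x^2) * p'' x - 2 * x * p' x + (ch - c^2 * x^2) * p x = 0"
  shows "((\<lambda>y. (1 - y^2) * p' y) \<longlongrightarrow> 0) (at_left 1)"
    and "((\<lambda>y. (1 - y^2) * p' y) \<longlongrightarrow> 0) (at_right (-1))"
proof -
  obtain B where B: "\<And>x. x \<in> {-1..1} \<Longrightarrow> \<bar>p x\<bar> \<le> B"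
    using continuous_on_compact_abs_bound[OF compact_Icc cont] by blast
  define h' where "h' x = - (ch - c^2 * x^2) * p x" for x
  have dh: "((\<lambda>y. (1 - y^2) * p' y) has_real_derivative h' x) (at x)" if x: "x \<in> {-1<..<1}" for x
  proof -
    have "((\<lambda>y. (1 - y^2) * p' y) has_real_derivative (-2 * x) * p' x + (1 - x^2) * p'' x) (at x)"
      using ode[OF x] by (auto intro!: derivative_eq_intros simp: power2_eq_square)
    moreover have "(-2 * x) * p' x + (1 - x^2) * p'' x = h' x"
      using ode[OF x] unfolding h'_def by (simp add: algebra_simps)
    ultimately show ?thesis by simp
  qed
  have "\<bar>h' x\<bar> \<le> (\<bar>ch\<bar> + c^2) * B" if x: "x \<in> {-1<..<1}" for x
  proof -
    have "x^2 \<le> 1" using x by (simp add: abs_square_le_1 abs_le_iff)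
    then have "0 \<le> c^2 * x^2" "c^2 * x^2 \<le> c^2" by (simp_all add: mult_left_le)
    then have "\<bar>ch - c^2 * x^2\<bar> \<le> \<bar>ch\<bar> + c^2" by (smt (verit))
    then show ?thesis using B[of x] x by (auto simp: h'_def abs_mult intro: mult_mono)
  qed
  moreover have "\<bar>p x\<bar> \<le> B" "(p has_real_derivative p' x) (at x)" if "x \<in> {-1<..<1}" for x
    using B ode that by auto
  ultimately show "((\<lambda>y. (1 - y^2) * p' y) \<longlongrightarrow> 0) (at_left 1)"
    and "((\<lambda>y. (1 - y^2) * p' y) \<longlongrightarrow> 0) (at_right (-1))"
    using weighted_derivative_tendsto_0_at_left_1 weighted_derivative_tendsto_0_at_right_minus_1 dh
    by blast+
qed

lemma prolate_boundary_form_tendsto_0: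
  fixes p p' p'' :: "real \<Rightarrow> real" and ch c :: real and k :: nat
  assumes cont: "continuous_on {-1..1} p"
    and ode: "\<And>x. x \<in> {-1<..<1} \<Longrightarrow> (p has_real_derivative p' x) (at x) \<and> (p' has_real_derivative p'' x) (at x)
               \<and> (1 - x^2) * p'' x - 2 * x * p' x + (ch - c^2 * x^2) * p x = 0"
  defines "F \<equiv> \<lambda>x. (1 - x^2) * p' x * legP k x - (1 - x^2) * p x * dlegP k x"
  shows "(F \<longlongrightarrow> 0) (at_right (-1))" and "(F \<longlongrightarrow> 0) (at_left 1)"
proof -
  have sq: "((\<lambda>x::real. 1 - x^2) \<longlongrightarrow> 0) (at_right (-1))" "((\<lambda>x::real. 1 - x^2) \<longlongrightarrow> 0) (at_left 1)"
    by (intro tendsto_eq_intros; simp)+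
  note flux = prolate_flux_tendsto_0[OF cont ode]
  have ends: "(f \<longlongrightarrow> f (-1)) (at_right (-1))" "(f \<longlongrightarrow> f 1) (at_left 1)"
    if "continuous_on {-1..1} f" for f :: "real \<Rightarrow> real"
    using continuous_on_Icc_at_rightD[OF that] continuous_on_Icc_at_leftD[OF that] by simp_all
  note P = continuous_on_legP[of "{-1..1}"]
  show "(F \<longlongrightarrow> 0) (at_right (-1))"
    using tendsto_diff[OF tendsto_mult[OF flux(2) ends(1)[OF P(1)]]
        tendsto_mult[OF tendsto_mult[OF sq(1) ends(1)[OF cont]] ends(1)[OF P(2)]]]
    by (simp add: F_def)
  show "(F \<longlongrightarrow> 0) (at_left 1)"
    using tendsto_diff[OF tendsto_mult[OF flux(1) ends(2)[OF P(1)]]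
        tendsto_mult[OF tendsto_mult[OF sq(2) ends(2)[OF cont]] ends(2)[OF P(2)]]]
    by (simp add: F_def)
qed

lemma leg_moment_prolate_equation:
  fixes p p' p'' :: "real \<Rightarrow> real" and ch c :: real
  assumes cont: "continuous_on {-1..1} p"
    and ode: "\<And>x. x \<in> {-1<..<1} \<Longrightarrow> (p has_real_derivative p' x) (at x) \<and> (p' has_real_derivative p'' x) (at x)
               \<and> (1 - x^2) * p'' x - 2 * x * p' x + (ch - c^2 * x^2) * p x = 0"
  shows "(ch - real k * (real k + 1)) * leg_moment p k = c^2 * xmul (xmul (leg_moment p)) k"
proof -
  \<comment> \<open>Green's identity for the Legendre operator: F' = g, and F vanishes at both endpoints.\<close>
  define F where "F = (\<lambda>x. (1 - x^2) * p' x * legP k x - (1 - x^2) * p x * dlegP k x)"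
  define g where "g = (\<lambda>x. (real k * (real k + 1) - ch) * (p x * legP k x) + c^2 * (x * (x * p x) * legP k x))"
  have "(F has_real_derivative g x) (at x)" if x: "x \<in> {-1<..<1}" for x
  proof -
    have "(F has_real_derivative (- 2 * x * p' x + (1 - x^2) * p'' x) * legP k x - (- 2 * x) * p x * dlegP k x
                                 - (1 - x^2) * p x * d2legP k x) (at x)"
      unfolding F_def using ode[OF x]
      by (auto intro!: derivative_eq_intros has_real_derivative_legP has_real_derivative_dlegP
          simp: power2_eq_square algebra_simps)
    moreover have "(- 2 * x * p' x + (1 - x^2) * p'' x) * legP k x - (- 2 * x) * p x * dlegP k x
                    - (1 - x^2) * p x * d2legP k x = g x"
      using ode[OF x] legendre_equation_legP[of x k] unfolding g_def by algebra
    ultimately show ?thesis by simp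
  qed
  moreover note prolate_boundary_form_tendsto_0[OF cont ode, of k, folded F_def]
  ultimately have g0: "(g has_integral 0 - 0) {-1..1}"
    by (intro has_integral_from_one_sided_limits) auto
  have "(g has_integral (real k * (real k + 1) - ch) * leg_moment p k
                   + c^2 * leg_moment (\<lambda>x. x * (x * p x)) k) {-1..1}"
    unfolding g_def using cont
    by (intro has_integral_add has_integral_mult_right has_integral_leg_moment continuous_intros)
  from has_integral_unique[OF this g0]
  have "(real k * (real k + 1) - ch) * leg_moment p k + c^2 * leg_moment (\<lambda>x. x * (x * p x)) k = 0"
    by simp
  moreover have "leg_moment (\<lambda>x. x * (x * p x)) = xmul (xmul (leg_moment p))"
    using cont by (simp add: leg_moment_times_x continuous_intros)
  ultimately show ?thesis by (simp add: algebra_simps)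
qed

section \<open>Decay of the moments\<close>

lemma abs_xmul_le: "\<bar>xmul m k\<bar> \<le> \<bar>m (Suc k)\<bar> + \<bar>m (k - 1)\<bar>"
proof -
  have "\<bar>(real k + 1) * m (Suc k) + real k * m (k - 1)\<bar> \<le> (real k + 1) * \<bar>m (Suc k)\<bar> + real k * \<bar>m (k - 1)\<bar>"
    by (rule order_trans[OF abs_triangle_ineq]) (simp add: abs_mult)
  also have "\<dots> \<le> (2 * real k + 1) * (\<bar>m (Suc k)\<bar> + \<bar>m (k - 1)\<bar>)"
    by (simp add: algebra_simps)
  finally show ?thesis by (simp add: xmul_def abs_divide field_simps)
qed

lemma abs_xmul_xmul_le:
  assumes "1 \<le> k"
  shows "\<bar>xmul (xmul m) k\<bar> \<le> \<bar>m (k + 2)\<bar> + 2 * \<bar>m k\<bar> + \<bar>m (k - 2)\<bar>"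
proof -
  have "\<bar>xmul (xmul m) k\<bar> \<le> \<bar>xmul m (Suc k)\<bar> + \<bar>xmul m (k - 1)\<bar>" by (rule abs_xmul_le)
  also have "\<dots> \<le> (\<bar>m (k + 2)\<bar> + \<bar>m k\<bar>) + (\<bar>m k\<bar> + \<bar>m (k - 2)\<bar>)"
    using abs_xmul_le[of m "Suc k"] abs_xmul_le[of m "k - 1"] assms
    by (simp add: Suc_diff_Suc numeral_2_eq_2 diff_diff_add)
  finally show ?thesis by simp
qed

lemma two_step_contraction_iterate:
  fixes x :: "nat \<Rightarrow> real" and \<rho> \<sigma> A :: real
  assumes contr: "\<And>k. k0 \<le> k \<Longrightarrow> \<bar>x k\<bar> \<le> \<sigma>^2 / (\<rho>^2 + 1) * (\<bar>x (k + 2)\<bar> + \<bar>x (k - 2)\<bar>)"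
    and growth: "\<And>k. \<bar>x k\<bar> \<le> A * \<rho>^k" and \<rho>: "1 \<le> \<rho>"
    and "k0 + 2 * i \<le> k"
  shows "\<bar>x k\<bar> \<le> A * \<rho>^k * (\<sigma>^2)^i"
  using \<open>k0 + 2 * i \<le> k\<close>
proof (induction i arbitrary: k)
  case 0
  then show ?case using growth by simp
next
  case (Suc i)
  have A: "0 \<le> A" using growth[of 0] by auto
  have "\<bar>x (k + 2)\<bar> \<le> A * \<rho>^(k + 2) * (\<sigma>^2)^i" "\<bar>x (k - 2)\<bar> \<le> A * \<rho>^(k - 2) * (\<sigma>^2)^i"
    using Suc.IH[of "k + 2"] Suc.IH[of "k - 2"] Suc.prems by auto
  moreover have "\<rho>^(k - 2) \<le> \<rho>^k" using \<rho> by (intro power_increasing) auto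
  then have "A * \<rho>^(k - 2) * (\<sigma>^2)^i \<le> A * \<rho>^k * (\<sigma>^2)^i"
    using A by (intro mult_right_mono mult_left_mono) auto
  moreover have "A * \<rho>^(k + 2) * (\<sigma>^2)^i = \<rho>^2 * (A * \<rho>^k * (\<sigma>^2)^i)"
    by (simp add: power_add power2_eq_square)
  ultimately have "\<bar>x (k + 2)\<bar> + \<bar>x (k - 2)\<bar> \<le> (\<rho>^2 + 1) * (A * \<rho>^k * (\<sigma>^2)^i)"
    unfolding distrib_right by linarith
  then have "\<sigma>^2 / (\<rho>^2 + 1) * (\<bar>x (k + 2)\<bar> + \<bar>x (k - 2)\<bar>)
             \<le> \<sigma>^2 / (\<rho>^2 + 1) * ((\<rho>^2 + 1) * (A * \<rho>^k * (\<sigma>^2)^i))"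
    by (rule mult_left_mono) simp
  also have "\<dots> = \<sigma>^2 * (A * \<rho>^k * (\<sigma>^2)^i)"
    using add_pos_nonneg[of 1 "\<rho>^2"] by (simp add: field_simps)
  finally have "\<bar>x k\<bar> \<le> \<sigma>^2 * (A * \<rho>^k * (\<sigma>^2)^i)" using contr[of k] Suc.prems by simp
  then show ?case by (simp add: mult_ac)
qed

lemma decay_of_two_step_contraction:
  fixes x :: "nat \<Rightarrow> real" and \<rho> \<sigma> A :: real
  assumes contr: "\<And>k. k0 \<le> k \<Longrightarrow> \<bar>x k\<bar> \<le> \<sigma>^2 / (\<rho>^2 + 1) * (\<bar>x (k + 2)\<bar> + \<bar>x (k - 2)\<bar>)"
    and growth: "\<And>k. \<bar>x k\<bar> \<le> A * \<rho>^k" and \<rho>: "1 \<le> \<rho>" and \<sigma>: "0 < \<sigma>" "\<sigma> \<le> 1"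
  obtains C where "\<And>k. k0 \<le> k \<Longrightarrow> \<bar>x k\<bar> \<le> C * (\<rho> * \<sigma>)^k"
proof (rule that)
  fix k assume "k0 \<le> k"
  have A: "0 \<le> A" using growth[of 0] by auto
  define i where "i = (k - k0) div 2"
  have "k0 + 2 * i \<le> k" "k \<le> 2 * i + (k0 + 1)" using \<open>k0 \<le> k\<close> by (auto simp: i_def)
  have "\<sigma>^(2 * i) * \<sigma>^(k0 + 1) \<le> \<sigma>^k"
    unfolding power_add[symmetric] using \<sigma> \<open>k \<le> 2 * i + (k0 + 1)\<close> by (intro power_decreasing) auto
  then have "\<sigma>^(2 * i) \<le> \<sigma>^k / \<sigma>^(k0 + 1)" using \<sigma> by (simp add: field_simps)
  then have "A * \<rho>^k * \<sigma>^(2 * i) \<le> A * \<rho>^k * (\<sigma>^k / \<sigma>^(k0 + 1))"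
    using A \<rho> by (intro mult_left_mono) auto
  then have "\<bar>x k\<bar> \<le> A * \<rho>^k * (\<sigma>^k / \<sigma>^(k0 + 1))"
    using two_step_contraction_iterate[OF contr growth \<rho> \<open>k0 + 2 * i \<le> k\<close>] by (simp add: power_mult)
  then show "\<bar>x k\<bar> \<le> A / \<sigma>^(k0 + 1) * (\<rho> * \<sigma>)^k" by (simp add: power_mult_distrib field_simps)
qed

text \<open>For large k the recurrence bounds |m k| by a tiny multiple of |m (k + 2)| + |m (k - 2)|;
  iterating this against the a priori growth 7^k gives the rate 7 / 196 = 1 / 28.\<close>
lemma decay_of_xmul_recurrence:
  fixes m :: "nat \<Rightarrow> real" and ch E A :: real
  assumes rec: "\<And>k. (ch - real k * (real k + 1)) * m k = E * xmul (xmul m) k"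
    and E: "0 \<le> E" and growth: "\<And>k. \<bar>m k\<bar> \<le> A * 7^k"
  obtains C k0 where "\<And>k. k0 \<le> k \<Longrightarrow> \<bar>m k\<bar> \<le> C * (1/28)^k"
proof -
  define \<sigma> :: real where "\<sigma> = 1/196"
  define \<epsilon> :: real where "\<epsilon> = \<sigma>^2 / (7^2 + 1)"
  have \<epsilon>: "0 < \<epsilon>" by (simp add: \<epsilon>_def \<sigma>_def)
  obtain k0 :: nat where k0: "\<bar>ch\<bar> + 2 * E + E / \<epsilon> + 1 \<le> real k0"
    using real_arch_simple by blast
  have "\<bar>m k\<bar> \<le> \<epsilon> * (\<bar>m (k + 2)\<bar> + \<bar>m (k - 2)\<bar>)" if k: "max k0 1 \<le> k" for k
  proof -
    define D where "D = real k * (real k + 1) - ch - 2 * E"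
    have "real k \<le> real k * (real k + 1)" "real k0 \<le> real k" using k by (simp_all add: algebra_simps)
    then have D: "E / \<epsilon> + 1 \<le> D"
      using k0 abs_ge_self[of ch] unfolding D_def by linarith
    have "(real k * (real k + 1) - ch) * \<bar>m k\<bar> \<le> \<bar>(ch - real k * (real k + 1)) * m k\<bar>"
      by (simp add: abs_mult mult_right_mono)
    also have "\<dots> = E * \<bar>xmul (xmul m) k\<bar>" using rec[of k] E by (simp add: abs_mult)
    also have "\<dots> \<le> E * (\<bar>m (k + 2)\<bar> + 2 * \<bar>m k\<bar> + \<bar>m (k - 2)\<bar>)"
      using abs_xmul_xmul_le[of k m] k E by (intro mult_left_mono) auto
    finally have "D * \<bar>m k\<bar> \<le> E * (\<bar>m (k + 2)\<bar> + \<bar>m (k - 2)\<bar>)" by (simp add: D_def algebra_simps)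
    also have "\<dots> \<le> \<epsilon> * D * (\<bar>m (k + 2)\<bar> + \<bar>m (k - 2)\<bar>)"
      using D \<epsilon> by (intro mult_right_mono) (auto simp: field_simps)
    finally have "D * \<bar>m k\<bar> \<le> D * (\<epsilon> * (\<bar>m (k + 2)\<bar> + \<bar>m (k - 2)\<bar>))" by (simp add: algebra_simps)
    moreover have "0 < D" using D \<epsilon> E by (smt (verit) divide_nonneg_pos)
    ultimately show ?thesis by simp
  qed
  from decay_of_two_step_contraction[of "max k0 1" m \<sigma> 7 A, folded \<epsilon>_def, OF this growth]
  obtain C where "\<And>k. max k0 1 \<le> k \<Longrightarrow> \<bar>m k\<bar> \<le> C * (7 * \<sigma>)^k" by (auto simp: \<sigma>_def)
  then show thesis using that[of "max k0 1" C] by (simp add: \<sigma>_def)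
qed

section \<open>Series of Legendre functions of the second kind\<close>

definition bonnet_boundary :: "(nat \<Rightarrow> real) \<Rightarrow> (nat \<Rightarrow> real) \<Rightarrow> nat \<Rightarrow> real" where
  "bonnet_boundary m q N = real N / 2 * (m (N - 1) * q N - m N * q (N - 1))"

text \<open>Summation by parts against Bonnet's recurrence moves the multiplication by t from the functions q_k
  onto the coefficients, where it becomes xmul. Because q_1 = t q_0 - 1 (as for Q, unlike P), the
  term m 0 / 2 is left over.\<close>
lemma bonnet_summation_by_parts:
  fixes m q :: "nat \<Rightarrow> real" and t :: real
  assumes q1: "q (Suc 0) = t * q 0 - 1"
    and rec: "\<And>k. (real k + 2) * q (Suc (Suc k)) = (2 * real k + 3) * t * q (Suc k) - (real k + 1) * q k"
    and "1 \<le> N"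
  shows "t * (\<Sum>k<N. (real k + 1/2) * m k * q k) =
         m 0 / 2 + (\<Sum>k<N. (real k + 1/2) * xmul m k * q k) + bonnet_boundary m q N"
  using \<open>1 \<le> N\<close>
proof (induction N rule: dec_induct)
  case base
  show ?case by (simp add: bonnet_boundary_def xmul_def q1 algebra_simps)
next
  case (step N)
  obtain j where j: "N = Suc j" using step(1) by (cases N) auto
  have r: "(2 * real N + 1) * t * q N = (real N + 1) * q (Suc N) + real N * q (N - 1)"
    using rec[of j] j by (simp add: algebra_simps)
  have x: "(real N + 1/2) * xmul m N = ((real N + 1) * m (Suc N) + real N * m (N - 1)) / 2"
    unfolding xmul_def by (simp add: field_simps)
  have "t * (\<Sum>k<Suc N. (real k + 1/2) * m k * q k)
        = t * (\<Sum>k<N. (real k + 1/2) * m k * q k) + m N * ((2 * real N + 1) * t * q N) / 2"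
    by (simp add: algebra_simps)
  also have "\<dots> = m 0 / 2 + (\<Sum>k<Suc N. (real k + 1/2) * xmul m k * q k) + bonnet_boundary m q (Suc N)"
    unfolding step.IH r sum.lessThan_Suc x bonnet_boundary_def
    by (simp add: algebra_simps add_divide_distrib diff_divide_distrib)
  finally show ?case .
qed

lemma bonnet_boundary_tendsto_0:
  fixes x y :: "nat \<Rightarrow> real"
  assumes x: "\<And>n. n0 \<le> n \<Longrightarrow> \<bar>x n\<bar> \<le> C * (1/28)^n" and y: "\<And>n. \<bar>y n\<bar> \<le> D * 7^n"
  shows "bonnet_boundary x y \<longlonglongrightarrow> 0"
proof (rule Lim_null_comparison)
  show "(\<lambda>N. 29 / 2 * C * D * (real N * (1/4)^N)) \<longlonglongrightarrow> 0"
    using powser_times_n_limit_0[of "1/4 :: real"] by (intro tendsto_mult_right_zero) simp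
  show "\<forall>\<^sub>F N in sequentially. norm (bonnet_boundary x y N) \<le> 29 / 2 * C * D * (real N * (1/4)^N)"
    using eventually_ge_at_top[of "Suc n0"]
  proof eventually_elim
    case (elim N)
    then obtain j where j: "N = Suc j" "n0 \<le> j" by (cases N) auto
    have q: "(1/28::real)^n * 7^n = (1/4)^n" for n by (simp flip: power_mult_distrib)
    have D: "0 \<le> D" using y[of 0] by auto
    have "\<bar>x (N - 1) * y N\<bar> \<le> C * (1/28)^j * (D * 7^N)"
      unfolding abs_mult using x[of j] y[of N] j by (intro mult_mono) auto
    also have "\<dots> = 28 * C * D * (1/4)^N" by (simp add: j q[symmetric] power_mult_distrib)
    finally have a: "\<bar>x (N - 1) * y N\<bar> \<le> 28 * C * D * (1/4)^N" .
    have "\<bar>x N * y (N - 1)\<bar> \<le> C * (1/28)^N * (D * 7^N)"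
      unfolding abs_mult using x[of N] y[of j] j elim D
      by (intro mult_mono order_trans[OF _ mult_left_mono[of "7^j" "7^N" D]]) auto
    then have b: "\<bar>x N * y (N - 1)\<bar> \<le> C * D * (1/4)^N" by (simp add: q[symmetric] algebra_simps)
    have "norm (bonnet_boundary x y N) \<le> real N / 2 * (\<bar>x (N - 1) * y N\<bar> + \<bar>x N * y (N - 1)\<bar>)"
      using abs_triangle_ineq4[of "x (N - 1) * y N" "x N * y (N - 1)"]
      by (simp add: bonnet_boundary_def abs_mult mult_left_mono)
    also have "\<dots> \<le> real N / 2 * (29 * C * D * (1/4)^N)"
      using a b by (intro mult_left_mono) auto
    finally show ?case by (simp add: algebra_simps)
  qed
qed

lemma summable_decay_times_growth:
  fixes a :: "nat \<Rightarrow> real" and C D :: real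
  assumes decay: "\<And>k. k0 \<le> k \<Longrightarrow> \<bar>a k\<bar> \<le> C * (1/14)^k" and D: "0 \<le> D"
  shows "summable (\<lambda>k. \<bar>a k\<bar> * (D * 7^k))"
proof (rule summable_comparison_test_ev)
  show "summable (\<lambda>k. C * D * (1/2::real)^k)" by (intro summable_mult summable_geometric) simp
  show "\<forall>\<^sub>F k in sequentially. norm (\<bar>a k\<bar> * (D * 7^k)) \<le> C * D * (1/2)^k"
    using eventually_ge_at_top[of k0]
  proof eventually_elim
    case (elim k)
    have "norm (\<bar>a k\<bar> * (D * 7^k)) \<le> C * (1/14)^k * (D * 7^k)"
      using decay[OF elim] D by (simp add: mult_right_mono)
    also have "\<dots> = C * D * (1/2)^k" by (simp add: power_divide field_simps flip: power_mult_distrib)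
    finally show ?case .
  qed
qed

lemma legQ_series_has_derivatives:
  fixes a :: "nat \<Rightarrow> real" and C t :: real
  assumes decay: "\<And>k. k0 \<le> k \<Longrightarrow> \<bar>a k\<bar> \<le> C * (1/14)^k" and t: "t \<in> {-1<..<1}"
  shows "summable (\<lambda>k. a k * legQ k t)" "summable (\<lambda>k. a k * dlegQ k t)"
    "summable (\<lambda>k. a k * d2legQ k t)"
    "((\<lambda>x. \<Sum>k. a k * legQ k x) has_real_derivative (\<Sum>k. a k * dlegQ k t)) (at t)"
    "((\<lambda>x. \<Sum>k. a k * dlegQ k x) has_real_derivative (\<Sum>k. a k * d2legQ k t)) (at t)"
proof -
  define r where "r = (1 + \<bar>t\<bar>) / 2"
  define S where "S = {-r<..<r}"
  have r: "0 \<le> r" "r < 1" and tS: "t \<in> S" using t by (auto simp: r_def S_def abs_if field_simps)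
  obtain D where D: "\<And>k x. x \<in> {-r..r} \<Longrightarrow>
      \<bar>legQ k x\<bar> \<le> D * 7^k \<and> \<bar>dlegQ k x\<bar> \<le> D * 7^k \<and> \<bar>d2legQ k x\<bar> \<le> D * 7^k"
    using legQ_exponential_bound[OF r] by blast
  have D0: "0 \<le> D" using D[of 0 0] r by auto
  define M where "M k = \<bar>a k\<bar> * (D * 7^k)" for k
  have "summable M" unfolding M_def using decay D0 by (rule summable_decay_times_growth)
  have bounds: "norm (a k * legQ k x) \<le> M k" "norm (a k * dlegQ k x) \<le> M k" "norm (a k * d2legQ k x) \<le> M k"
    if "x \<in> S" for k x
    using D[of x k] that by (auto simp: S_def M_def abs_mult intro: mult_left_mono)
  have summable: "summable (\<lambda>k. a k * legQ k x)" "summable (\<lambda>k. a k * dlegQ k x)"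
    "summable (\<lambda>k. a k * d2legQ k x)" if "x \<in> S" for x
    by (rule summable_comparison_test'[OF \<open>summable M\<close>, where N=0], rule bounds[OF that])+
  then show "summable (\<lambda>k. a k * legQ k t)" "summable (\<lambda>k. a k * dlegQ k t)"
    "summable (\<lambda>k. a k * d2legQ k t)" using tS by auto
  have in_S: "x \<in> {-1<..<1}" if "x \<in> S" for x using that r by (auto simp: S_def)
  have dQ: "((\<lambda>x. a k * legQ k x) has_field_derivative a k * dlegQ k x) (at x within S)"
    if "x \<in> S" for k x
    by (rule has_field_derivative_at_within[OF DERIV_cmult[OF has_real_derivative_legQ[OF in_S[OF that]]]])
  have d2Q: "((\<lambda>x. a k * dlegQ k x) has_field_derivative a k * d2legQ k x) (at x within S)"
    if "x \<in> S" for k x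
    by (rule has_field_derivative_at_within[OF DERIV_cmult[OF has_real_derivative_dlegQ[OF in_S[OF that]]]])
  have "convex S" "t \<in> interior S" using tS by (auto simp: S_def)
  then show "((\<lambda>x. \<Sum>k. a k * legQ k x) has_real_derivative (\<Sum>k. a k * dlegQ k t)) (at t)"
    and "((\<lambda>x. \<Sum>k. a k * dlegQ k x) has_real_derivative (\<Sum>k. a k * d2legQ k t)) (at t)"
    using has_field_derivative_series'(2)[OF _ dQ Weierstrass_m_test'[OF bounds(2) \<open>summable M\<close>] tS
        summable(1)[OF tS]]
      has_field_derivative_series'(2)[OF _ d2Q Weierstrass_m_test'[OF bounds(3) \<open>summable M\<close>] tS
        summable(2)[OF tS]]
    by blast+
qed

lemma xmul_decay:
  fixes m :: "nat \<Rightarrow> real"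
  assumes decay: "\<And>k. k0 \<le> k \<Longrightarrow> \<bar>m k\<bar> \<le> C * (1/28)^k"
  shows "\<And>k. Suc k0 \<le> k \<Longrightarrow> \<bar>xmul m k\<bar> \<le> 29 * C * (1/28)^k"
proof -
  fix k assume k: "Suc k0 \<le> k"
  then obtain j where j: "k = Suc j" "k0 \<le> j" by (cases k) auto
  have "0 \<le> C * (1/28)^k0" using decay[of k0] abs_ge_zero[of "m k0"] by linarith
  moreover have "0 < (1/28::real)^k0" by simp
  ultimately have C: "0 \<le> C" using zero_le_mult_iff not_le by metis
  have "\<bar>xmul m k\<bar> \<le> C * (1/28)^Suc k + C * (1/28)^j"
    using abs_xmul_le[of m k] decay[of "Suc k"] decay[of j] j by simp
  also have "\<dots> = C * (1/28)^k * (1/28 + 28)" by (simp add: j algebra_simps)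
  also have "\<dots> \<le> 29 * C * (1/28)^k" using C by (simp add: algebra_simps)
  finally show "\<bar>xmul m k\<bar> \<le> 29 * C * (1/28)^k" .
qed

lemma legendre_operator_legQ_partial_sums:
  fixes m :: "nat \<Rightarrow> real" and ch E t :: real
  assumes rec: "\<And>k. (ch - real k * (real k + 1)) * m k = E * xmul (xmul m) k"
    and t: "t \<in> {-1<..<1}" and "1 \<le> N"
  defines "q \<equiv> \<lambda>k. legQ k t"
  shows "(\<Sum>k<N. (real k + 1/2) * m k *
            ((1 - t^2) * d2legQ k t - 2 * t * dlegQ k t + (ch - E * t^2) * legQ k t))
         = - E * (m 0 * t + m 1) / 2 - E * (bonnet_boundary (xmul m) q N + t * bonnet_boundary m q N)"
proof -
  define S where "S x = (\<Sum>k<N. (real k + 1/2) * x k * q k)" for x :: "nat \<Rightarrow> real"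
  have "t * S x = x 0 / 2 + S (xmul x) + bonnet_boundary x q N" for x
    unfolding S_def q_def
    by (rule bonnet_summation_by_parts[OF _ bonnet_family.rec_f[OF bonnet_family_legQ] \<open>1 \<le> N\<close>]) simp
  moreover have summand: "(real k + 1/2) * m k *
                         ((1 - t^2) * d2legQ k t - 2 * t * dlegQ k t + (ch - E * t^2) * legQ k t)
                       = E * ((real k + 1/2) * xmul (xmul m) k * q k) - E * t^2 * ((real k + 1/2) * m k * q k)"
    for k
  proof -
    have "(1 - t^2) * d2legQ k t - 2 * t * dlegQ k t + (ch - E * t^2) * legQ k t
          = (ch - real k * (real k + 1)) * q k - E * t^2 * q k"
      using legendre_equation_legQ[OF t, of k] unfolding q_def by (simp add: algebra_simps)
    then have "(real k + 1/2) * m k *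
                 ((1 - t^2) * d2legQ k t - 2 * t * dlegQ k t + (ch - E * t^2) * legQ k t)
               = (real k + 1/2) * m k * ((ch - real k * (real k + 1)) * q k - E * t^2 * q k)"
      by (simp only:)
    also have "\<dots> = (real k + 1/2) * ((ch - real k * (real k + 1)) * m k) * q k
                      - E * t^2 * ((real k + 1/2) * m k * q k)"
      by (simp add: algebra_simps)
    also have "\<dots> = (real k + 1/2) * (E * xmul (xmul m) k) * q k - E * t^2 * ((real k + 1/2) * m k * q k)"
      by (simp only: rec)
    finally show ?thesis by (simp add: mult_ac)
  qed
  have "(\<Sum>k<N. (real k + 1/2) * m k *
            ((1 - t^2) * d2legQ k t - 2 * t * dlegQ k t + (ch - E * t^2) * legQ k t))
        = E * S (xmul (xmul m)) - E * t * (t * S m)"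
    unfolding summand by (simp add: S_def sum_subtractf sum_distrib_left power2_eq_square algebra_simps)
  ultimately show ?thesis by (simp add: xmul_def algebra_simps)
qed

lemma legendre_operator_legQ_series_sums:
  fixes m :: "nat \<Rightarrow> real" and ch E C t :: real
  assumes rec: "\<And>k. (ch - real k * (real k + 1)) * m k = E * xmul (xmul m) k"
    and decay: "\<And>k. k0 \<le> k \<Longrightarrow> \<bar>m k\<bar> \<le> C * (1/28)^k"
    and t: "t \<in> {-1<..<1}"
  shows "(\<lambda>k. (real k + 1/2) * m k *
            ((1 - t^2) * d2legQ k t - 2 * t * dlegQ k t + (ch - E * t^2) * legQ k t))
           sums (- E * (m 0 * t + m 1) / 2)"
proof -
  define q where "q k = legQ k t" for k
  have "0 \<le> \<bar>t\<bar>" "\<bar>t\<bar> < 1" using t by auto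
  then obtain D where "\<And>k x. x \<in> {-\<bar>t\<bar>..\<bar>t\<bar>} \<Longrightarrow>
      \<bar>legQ k x\<bar> \<le> D * 7^k \<and> \<bar>dlegQ k x\<bar> \<le> D * 7^k \<and> \<bar>d2legQ k x\<bar> \<le> D * 7^k"
    using legQ_exponential_bound[of "\<bar>t\<bar>"] by blast
  moreover have "t \<in> {-\<bar>t\<bar>..\<bar>t\<bar>}" by auto
  ultimately have D: "\<bar>q k\<bar> \<le> D * 7^k" for k by (simp add: q_def)
  have "(\<lambda>N. - E * (m 0 * t + m 1) / 2 - E * (bonnet_boundary (xmul m) q N + t * bonnet_boundary m q N))
          \<longlonglongrightarrow> - E * (m 0 * t + m 1) / 2 - E * (0 + t * 0)"
    by (intro tendsto_intros bonnet_boundary_tendsto_0[OF decay D]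
        bonnet_boundary_tendsto_0[OF xmul_decay[OF decay] D])
  moreover have "\<forall>\<^sub>F N in sequentially.
      - E * (m 0 * t + m 1) / 2 - E * (bonnet_boundary (xmul m) q N + t * bonnet_boundary m q N)
      = (\<Sum>k<N. (real k + 1/2) * m k *
            ((1 - t^2) * d2legQ k t - 2 * t * dlegQ k t + (ch - E * t^2) * legQ k t))"
    using eventually_ge_at_top[of 1]
    by eventually_elim (simp add: legendre_operator_legQ_partial_sums[OF rec t] q_def[abs_def])
  ultimately show ?thesis unfolding sums_def by (simp add: Lim_transform_eventually)
qed

lemma half_integer_weight_decay:
  fixes m :: "nat \<Rightarrow> real"
  assumes "\<bar>m k\<bar> \<le> C * (1/28)^k"
  shows "\<bar>(real k + 1/2) * m k\<bar> \<le> C * (1/14)^k"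
proof -
  have "Suc k \<le> 2^k" by (rule Suc_leI) simp
  then have "real (Suc k) \<le> real (2^k)" by (simp only: of_nat_le_iff)
  then have "real k + 1 \<le> 2^k" by simp
  then have "\<bar>(real k + 1/2) * m k\<bar> \<le> 2^k * (C * (1/28)^k)"
    using assms by (simp add: abs_mult) (intro mult_mono; simp)
  also have "\<dots> = C * (1/14)^k" by (simp add: power_divide field_simps flip: power_mult_distrib)
  finally show ?thesis .
qed

lemma legQ_series_solves_legendre_operator:
  fixes m :: "nat \<Rightarrow> real" and ch E C :: real
  assumes rec: "\<And>k. (ch - real k * (real k + 1)) * m k = E * xmul (xmul m) k"
    and decay: "\<And>k. k0 \<le> k \<Longrightarrow> \<bar>m k\<bar> \<le> C * (1/28)^k"
  shows "\<exists>Phi Phi1 Phi2. \<forall>t\<in>{-1<..<1::real}.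
           (\<lambda>k. (real k + 1/2) * m k * legQ k t) sums Phi t \<and>
           (Phi has_real_derivative Phi1 t) (at t) \<and> (Phi1 has_real_derivative Phi2 t) (at t) \<and>
           (1 - t^2) * Phi2 t - 2 * t * Phi1 t + (ch - E * t^2) * Phi t = - E * (m 0 * t + m 1) / 2"
proof (intro exI ballI conjI)
  fix t :: real assume t: "t \<in> {-1<..<1}"
  have "\<bar>(real k + 1/2) * m k\<bar> \<le> C * (1/14)^k" if "k0 \<le> k" for k
    using decay[OF that] by (rule half_integer_weight_decay)
  note series = legQ_series_has_derivatives[OF this t]
  show "(\<lambda>k. (real k + 1/2) * m k * legQ k t) sums (\<Sum>k. (real k + 1/2) * m k * legQ k t)"
    using series(1) by (rule summable_sums)
  show "((\<lambda>x. \<Sum>k. (real k + 1/2) * m k * legQ k x) has_real_derivative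
          (\<Sum>k. (real k + 1/2) * m k * dlegQ k t)) (at t)"
    and "((\<lambda>x. \<Sum>k. (real k + 1/2) * m k * dlegQ k x) has_real_derivative
          (\<Sum>k. (real k + 1/2) * m k * d2legQ k t)) (at t)"
    using series(4,5) by simp_all
  have "(\<lambda>k. (1 - t^2) * ((real k + 1/2) * m k * d2legQ k t) - 2 * t * ((real k + 1/2) * m k * dlegQ k t)
              + (ch - E * t^2) * ((real k + 1/2) * m k * legQ k t))
        sums ((1 - t^2) * (\<Sum>k. (real k + 1/2) * m k * d2legQ k t) - 2 * t * (\<Sum>k. (real k + 1/2) * m k * dlegQ k t)
           + (ch - E * t^2) * (\<Sum>k. (real k + 1/2) * m k * legQ k t))"
    by (intro sums_add sums_diff sums_mult summable_sums series)
  moreover have "(\<lambda>k. (1 - t^2) * ((real k + 1/2) * m k * d2legQ k t) - 2 * t * ((real k + 1/2) * m k * dlegQ k t)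
              + (ch - E * t^2) * ((real k + 1/2) * m k * legQ k t))
      = (\<lambda>k. (real k + 1/2) * m k * ((1 - t^2) * d2legQ k t - 2 * t * dlegQ k t + (ch - E * t^2) * legQ k t))"
    by (rule ext) (simp add: ring_distribs mult_ac diff_divide_distrib add_divide_distrib)
  ultimately have "(\<lambda>k. (real k + 1/2) * m k * ((1 - t^2) * d2legQ k t - 2 * t * dlegQ k t + (ch - E * t^2) * legQ k t))
      sums ((1 - t^2) * (\<Sum>k. (real k + 1/2) * m k * d2legQ k t) - 2 * t * (\<Sum>k. (real k + 1/2) * m k * dlegQ k t)
           + (ch - E * t^2) * (\<Sum>k. (real k + 1/2) * m k * legQ k t))"
    by (simp only:)
  from sums_unique2[OF this legendre_operator_legQ_series_sums[OF rec decay t]]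
  show "(1 - t^2) * (\<Sum>k. (real k + 1/2) * m k * d2legQ k t) - 2 * t * (\<Sum>k. (real k + 1/2) * m k * dlegQ k t)
           + (ch - E * t^2) * (\<Sum>k. (real k + 1/2) * m k * legQ k t) = - E * (m 0 * t + m 1) / 2" .
qed

lemma leg_moment_decay_of_prolate_solution:
  fixes p p' p'' :: "real \<Rightarrow> real" and ch c :: real
  assumes cont: "continuous_on {-1..1} p"
    and ode: "\<And>x. x \<in> {-1<..<1} \<Longrightarrow> (p has_real_derivative p' x) (at x) \<and> (p' has_real_derivative p'' x) (at x)
               \<and> (1 - x^2) * p'' x - 2 * x * p' x + (ch - c^2 * x^2) * p x = 0"
  obtains C k0 where "\<And>k. k0 \<le> k \<Longrightarrow> \<bar>leg_moment p k\<bar> \<le> C * (1/28)^k"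
proof -
  obtain B where "\<And>x. x \<in> {-1..1} \<Longrightarrow> \<bar>p x\<bar> \<le> B"
    using continuous_on_compact_abs_bound[OF compact_Icc cont] by blast
  then have "\<bar>leg_moment p k\<bar> \<le> 2 * B * 7^k" for k by (rule abs_leg_moment_le[OF cont])
  with decay_of_xmul_recurrence[OF leg_moment_prolate_equation[OF cont ode] zero_le_power2] that
  show thesis by blast
qed

theorem theorem68:
  fixes c :: real and psi :: "nat \<Rightarrow> real \<Rightarrow> real" and chi :: "nat \<Rightarrow> real" and n :: nat
  assumes "c > 0" and "pswf_system c psi chi"
  shows "\<exists>Phi Phi1 Phi2. \<forall>t\<in>{-1<..<1::real}.
           (\<lambda>k. alpha psi n k * legQ k t) sums Phi t \<and>
           (Phi has_real_derivative Phi1 t) (at t) \<and>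
           (Phi1 has_real_derivative Phi2 t) (at t) \<and>
           (1 - t\<^sup>2) * Phi2 t - 2 * t * Phi1 t + (chi n - c\<^sup>2 * t\<^sup>2) * Phi t
             = - c\<^sup>2 * (alpha psi n 0 * t + alpha psi n 1 / 3)"
proof -
  from assms(2) obtain p' p'' where cont: "continuous_on {-1..1} (psi n)"
    and ode: "\<And>x. x \<in> {-1<..<1} \<Longrightarrow> (psi n has_real_derivative p' x) (at x) \<and>
               (p' has_real_derivative p'' x) (at x) \<and>
               (1 - x^2) * p'' x - 2 * x * p' x + (chi n - c^2 * x^2) * psi n x = 0"
    unfolding pswf_system_def by blast
  note rec = leg_moment_prolate_equation[OF cont ode]
  obtain C k0 where decay: "\<And>k. k0 \<le> k \<Longrightarrow> \<bar>leg_moment (psi n) k\<bar> \<le> C * (1/28)^k"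
    using leg_moment_decay_of_prolate_solution[OF cont ode] by blast
  have "alpha psi n = (\<lambda>k. (real k + 1/2) * leg_moment (psi n) k)"
    by (simp add: fun_eq_iff alpha_def leg_moment_def)
  with legQ_series_solves_legendre_operator[OF rec decay] show ?thesis by (simp add: field_simps)
qed

end
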